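(* Let $\rho$ be an $N$-qubit density matrix and let $\hat\rho,\hat\rho'$ be two independent Pauli shadows of $\rho$. Then $$\mathrm{Var}\big[\mathrm{Tr}(\hat\rho\hat\rho')\big]\le\mathbb{E}\big[\mathrm{Tr}(\hat\rho\hat\rho')^2\big]\le 8.5^N.$$
   Context: A Pauli shadow of an $N$-qubit state $\rho$ is obtained as follows: for each qubit $i$ choose a basis $\mathcal{B}_i\in\{\mathcal{X},\mathcal{Y},\mathcal{Z}\}$ independently and uniformly at random, measure a fresh copy of $\rho$ with each qubit $i$ in the eigenbasis of the Pauli operator $\mathcal{B}_i$, obtaining outcomes $s_i\in\{\pm\}$ (the post-measurement eigenstate being $|\mathcal{B}_i,s_i\rangle$), and set $\hat\rho=\bigotimes_{i=1}^N\big(3|\mathcal{B}_i,s_i\rangle\langle\mathcal{B}_i,s_i|-\mathbb{I}_2\big)$. Independent shadows use independent bases and independent copies of $\rho$. *)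

theory Defs
  imports "HOL-Probability.Probability"
begin

text \<open>An N-qubit operator is represented by its matrix entries in the computational
  basis, indexed by bit strings of length N (bool lists; bit i of the list is qubit i,
  False = |0>, True = |1>).  Only entries with both indices in qbits N are relevant.\<close>

type_synonym op = "bool list \<Rightarrow> bool list \<Rightarrow> complex"

definition qbits :: "nat \<Rightarrow> bool list set" where
  "qbits N = {xs. length xs = N}"

definition op_mult :: "nat \<Rightarrow> op \<Rightarrow> op \<Rightarrow> op" where
  "op_mult N A B = (\<lambda>x y. \<Sum>z\<in>qbits N. A x z * B z y)"

definition op_trace :: "nat \<Rightarrow> op \<Rightarrow> complex" where
  "op_trace N A = (\<Sum>x\<in>qbits N. A x x)"

definition hermitian_op :: "nat \<Rightarrow> op \<Rightarrow> bool" where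
  "hermitian_op N A \<longleftrightarrow> (\<forall>x\<in>qbits N. \<forall>y\<in>qbits N. A y x = cnj (A x y))"

definition psd_op :: "nat \<Rightarrow> op \<Rightarrow> bool" where
  "psd_op N A \<longleftrightarrow> hermitian_op N A \<and>
     (\<forall>v :: bool list \<Rightarrow> complex.
        0 \<le> Re (\<Sum>x\<in>qbits N. \<Sum>y\<in>qbits N. cnj (v x) * A x y * v y))"

definition density_matrix :: "nat \<Rightarrow> op \<Rightarrow> bool" where
  "density_matrix N \<rho> \<longleftrightarrow> psd_op N \<rho> \<and> op_trace N \<rho> = 1"

datatype pauli = PX | PY | PZ

lemma UNIV_pauli: "(UNIV :: pauli set) = {PX, PY, PZ}"
  using pauli.exhaust by blast

instance pauli :: finite
  by standard (simp add: UNIV_pauli)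

text \<open>ket b s j: the j-th computational-basis component (j = False ~ |0>, True ~ |1>)
  of the eigenvector |b,s> of the Pauli operator b with eigenvalue s
  (s = True means +1, s = False means -1).\<close>

fun ket :: "pauli \<Rightarrow> bool \<Rightarrow> bool \<Rightarrow> complex" where
  "ket PZ s j = (if j = (\<not> s) then 1 else 0)"
| "ket PX s j = (if j \<and> \<not> s then - 1 else 1) / complex_of_real (sqrt 2)"
| "ket PY s j = (if j then (if s then \<i> else - \<i>) else 1) / complex_of_real (sqrt 2)"

definition proj1 :: "pauli \<Rightarrow> bool \<Rightarrow> bool \<Rightarrow> bool \<Rightarrow> complex" where
  "proj1 b s j k = ket b s j * cnj (ket b s k)"

definition proj_prod :: "nat \<Rightarrow> pauli list \<Rightarrow> bool list \<Rightarrow> op" where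
  "proj_prod N B S = (\<lambda>x y. \<Prod>i<N. proj1 (B ! i) (S ! i) (x ! i) (y ! i))"

definition shadow :: "nat \<Rightarrow> pauli list \<Rightarrow> bool list \<Rightarrow> op" where
  "shadow N B S = (\<lambda>x y. \<Prod>i<N. 3 * proj1 (B ! i) (S ! i) (x ! i) (y ! i)
                                   - (if x ! i = y ! i then 1 else 0))"

text \<open>Joint probability of the bases B (uniform, independent) and the outcomes S
  (Born rule: Tr(rho |B,S><B,S|)).\<close>
definition shadow_weight :: "nat \<Rightarrow> op \<Rightarrow> pauli list \<times> bool list \<Rightarrow> real" where
  "shadow_weight N \<rho> = (\<lambda>(B, S).
     if length B = N \<and> length S = N
     then (1 / 3) ^ N * Re (op_trace N (op_mult N \<rho> (proj_prod N B S)))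
     else 0)"

definition shadow_pmf :: "nat \<Rightarrow> op \<Rightarrow> (pauli list \<times> bool list) pmf" where
  "shadow_pmf N \<rho> = embed_pmf (shadow_weight N \<rho>)"

definition shadow_overlap :: "nat \<Rightarrow> (pauli list \<times> bool list) \<times> (pauli list \<times> bool list) \<Rightarrow> real" where
  "shadow_overlap N = (\<lambda>((B, S), (B', S')).
     Re (op_trace N (op_mult N (shadow N B S) (shadow N B' S'))))"

end

theory Submission
  imports Defs
begin

text \<open>Both shadows are tensor products, so Tr(hat rho hat rho') is a product over the qubits of
  single-qubit overlaps, each equal to 5, -4 or 1/2 according as the two bases and outcomes agree.
  Its square is therefore bounded by a product of factors 25 (equal bases) or 1/4 (different
  bases) which no longer depends on the outcomes.  Summing the Born probabilities over the
  outcomes leaves the uniform distribution on the bases, under which this bound has expectation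
  ((3 * 25 + 6 * 1/4) / 9)^N = 8.5^N.  The variance is at most the second moment.\<close>

lemma lists_length_Suc_eq_image:
  "{xs. length xs = Suc n} = (\<lambda>(a, xs). a # xs) ` (UNIV \<times> {xs. length xs = n})"
  by (auto simp: image_iff length_Suc_conv)

lemma finite_lists_length_eq_UNIV: "finite {xs :: 'a :: finite list. length xs = n}"
  using finite_lists_length_eq[of "UNIV :: 'a set" n] by simp

lemma sum_lists_length_prod:
  "(\<Sum>xs\<in>{xs :: 'a :: finite list. length xs = n}. \<Prod>i<n. f i (xs ! i))
     = (\<Prod>i<n. \<Sum>a\<in>UNIV. (f i a :: 'b :: comm_semiring_1))"
proof (induction n arbitrary: f)
  case 0
  then show ?case by simp
next
  case (Suc n)
  have inj: "inj_on (\<lambda>(a, xs). a # xs) (UNIV \<times> {xs :: 'a list. length xs = n})"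
    by (auto simp: inj_on_def)
  have "(\<Sum>xs\<in>{xs :: 'a list. length xs = Suc n}. \<Prod>i<Suc n. f i (xs ! i))
      = (\<Sum>a\<in>UNIV. \<Sum>xs\<in>{xs :: 'a list. length xs = n}. f 0 a * (\<Prod>i<n. f (Suc i) (xs ! i)))"
    unfolding lists_length_Suc_eq_image sum.reindex[OF inj]
    by (simp add: sum.cartesian_product case_prod_unfold prod.lessThan_Suc_shift
             del: prod.lessThan_Suc)
  also have "\<dots> = (\<Prod>i<Suc n. \<Sum>a\<in>UNIV. f i a)"
    by (simp add: Suc.IH[of "\<lambda>i. f (Suc i)"] sum_distrib_left[symmetric] sum_distrib_right
                  prod.lessThan_Suc_shift del: prod.lessThan_Suc)
  finally show ?case .
qed

lemma sum_lists_length_prod2: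
  "(\<Sum>xs\<in>{xs :: 'a :: finite list. length xs = n}. \<Sum>ys\<in>{ys :: 'c :: finite list. length ys = n}.
       \<Prod>i<n. f i (xs ! i) (ys ! i))
     = (\<Prod>i<n. \<Sum>a\<in>UNIV. \<Sum>b\<in>UNIV. (f i a b :: 'b :: comm_semiring_1))"
  by (simp only: sum_lists_length_prod[where f = "\<lambda>i. f i (xs ! i)" for xs]
                 sum_lists_length_prod[where f = "\<lambda>i a. \<Sum>b\<in>UNIV. f i a b"])

lemma prod_nth_eq_indicator:
  assumes "length xs = n" "length ys = n"
  shows "(\<Prod>i<n. if xs ! i = ys ! i then 1 else 0 :: 'a :: comm_semiring_1)
           = (if xs = ys then 1 else 0)"
proof (cases "xs = ys")
  case False
  then obtain i where "i < n" "xs ! i \<noteq> ys ! i"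
    using assms nth_equalityI[of xs ys] by auto
  then show ?thesis using False by (auto intro!: prod_zero bexI[of _ i])
qed simp

definition qubit_shadow :: "pauli \<Rightarrow> bool \<Rightarrow> bool \<Rightarrow> bool \<Rightarrow> complex" where
  "qubit_shadow b s j k = 3 * proj1 b s j k - (if j = k then 1 else 0)"

definition qubit_overlap :: "pauli \<Rightarrow> bool \<Rightarrow> pauli \<Rightarrow> bool \<Rightarrow> real" where
  "qubit_overlap b s b' s' = (if b = b' then if s = s' then 5 else - 4 else 1 / 2)"

definition qubit_overlap_sq_bound :: "pauli \<Rightarrow> pauli \<Rightarrow> real" where
  "qubit_overlap_sq_bound b b' = (if b = b' then 25 else 1 / 4)"

lemma of_real_sqrt2_squared: "complex_of_real (sqrt 2) * complex_of_real (sqrt 2) = 2"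
  by (simp flip: of_real_mult)

lemma sum_outcomes_proj1: "(\<Sum>s\<in>UNIV. proj1 b s j k) = (if j = k then 1 else 0)"
  by (cases b; cases j; cases k) (auto simp: proj1_def UNIV_bool of_real_sqrt2_squared field_simps)

lemma trace_qubit_shadow_mult:
  "(\<Sum>j\<in>UNIV. \<Sum>k\<in>UNIV. qubit_shadow b s j k * qubit_shadow b' s' k j)
     = complex_of_real (qubit_overlap b s b' s')"
  by (cases b; cases b'; cases s; cases s')
     (auto simp: qubit_shadow_def qubit_overlap_def proj1_def UNIV_bool of_real_sqrt2_squared
                 field_simps)

lemma qubit_overlap_sq_le: "(qubit_overlap b s b' s')\<^sup>2 \<le> qubit_overlap_sq_bound b b'"
  by (simp add: qubit_overlap_def qubit_overlap_sq_bound_def power2_eq_square)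

lemma sum_qubit_overlap_sq_bound:
  "(\<Sum>b\<in>UNIV. \<Sum>b'\<in>UNIV. qubit_overlap_sq_bound b b' / 9) = 8.5"
  by (simp add: UNIV_pauli qubit_overlap_sq_bound_def)

lemma finite_qbits: "finite (qbits N)"
  unfolding qbits_def by (rule finite_lists_length_eq_UNIV)

lemma shadow_overlap_eq_prod:
  "shadow_overlap N ((B, S), (B', S')) = (\<Prod>i<N. qubit_overlap (B ! i) (S ! i) (B' ! i) (S' ! i))"
proof -
  have "op_trace N (op_mult N (shadow N B S) (shadow N B' S'))
      = (\<Sum>x\<in>qbits N. \<Sum>z\<in>qbits N. \<Prod>i<N.
           qubit_shadow (B ! i) (S ! i) (x ! i) (z ! i) * qubit_shadow (B' ! i) (S' ! i) (z ! i) (x ! i))"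
    unfolding op_trace_def op_mult_def shadow_def qubit_shadow_def prod.distrib ..
  also have "\<dots> = (\<Prod>i<N. complex_of_real (qubit_overlap (B ! i) (S ! i) (B' ! i) (S' ! i)))"
    unfolding qbits_def trace_qubit_shadow_mult sum_lists_length_prod2[where f = "\<lambda>i j k.
      qubit_shadow (B ! i) (S ! i) j k * qubit_shadow (B' ! i) (S' ! i) k j"] by (rule refl)
  finally show ?thesis
    by (simp add: shadow_overlap_def del: of_real_prod flip: of_real_prod)
qed

lemma shadow_overlap_sq_le:
  "(shadow_overlap N ((B, S), (B', S')))\<^sup>2 \<le> (\<Prod>i<N. qubit_overlap_sq_bound (B ! i) (B' ! i))"
  unfolding shadow_overlap_eq_prod prod_power_distrib
  by (rule prod_mono) (simp add: qubit_overlap_sq_le)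

lemma trace_mult_proj_prod:
  "op_trace N (op_mult N \<rho> (proj_prod N B S))
     = (\<Sum>x\<in>qbits N. \<Sum>z\<in>qbits N. \<rho> x z * (\<Prod>i<N. proj1 (B ! i) (S ! i) (z ! i) (x ! i)))"
  by (simp add: op_trace_def op_mult_def proj_prod_def)

lemma trace_mult_proj_prod_nonneg:
  assumes "psd_op N \<rho>"
  shows "0 \<le> Re (op_trace N (op_mult N \<rho> (proj_prod N B S)))"
proof -
  define v where "v x = (\<Prod>i<N. ket (B ! i) (S ! i) (x ! i))" for x
  have "op_trace N (op_mult N \<rho> (proj_prod N B S))
      = (\<Sum>x\<in>qbits N. \<Sum>z\<in>qbits N. cnj (v x) * \<rho> x z * v z)"
    unfolding trace_mult_proj_prod v_def proj1_def
    by (intro sum.cong refl) (simp add: prod.distrib mult_ac)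
  then show ?thesis using assms unfolding psd_op_def by simp
qed

lemma sum_outcomes_trace_mult_proj_prod:
  "(\<Sum>S\<in>qbits N. op_trace N (op_mult N \<rho> (proj_prod N B S))) = op_trace N \<rho>"
proof -
  have "(\<Sum>S\<in>qbits N. op_trace N (op_mult N \<rho> (proj_prod N B S)))
     = (\<Sum>x\<in>qbits N. \<Sum>z\<in>qbits N. \<rho> x z * (\<Sum>S\<in>qbits N. \<Prod>i<N. proj1 (B ! i) (S ! i) (z ! i) (x ! i)))"
    unfolding trace_mult_proj_prod sum_distrib_left
    by (subst sum.swap, rule sum.cong[OF refl], rule sum.swap)
  also have "\<dots> = (\<Sum>x\<in>qbits N. \<Sum>z\<in>qbits N. \<rho> x z * (\<Prod>i<N. if z ! i = x ! i then 1 else 0))"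
    unfolding qbits_def sum_outcomes_proj1
      sum_lists_length_prod[where f = "\<lambda>i s. proj1 (B ! i) s (z ! i) (x ! i)" for x z] ..
  also have "\<dots> = (\<Sum>x\<in>qbits N. \<Sum>z\<in>qbits N. \<rho> x z * (if z = x then 1 else 0))"
    by (intro sum.cong refl) (simp add: qbits_def prod_nth_eq_indicator)
  also have "\<dots> = op_trace N \<rho>"
    by (simp add: op_trace_def finite_qbits if_distrib cong: if_cong)
  finally show ?thesis .
qed

abbreviation basis_choices :: "nat \<Rightarrow> pauli list set" where
  "basis_choices N \<equiv> {B. length B = N}"

lemma shadow_weight_nonneg: "density_matrix N \<rho> \<Longrightarrow> 0 \<le> shadow_weight N \<rho> \<omega>"
  by (cases \<omega>) (simp add: shadow_weight_def density_matrix_def trace_mult_proj_prod_nonneg)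

lemma shadow_weight_eq_0: "\<omega> \<notin> basis_choices N \<times> qbits N \<Longrightarrow> shadow_weight N \<rho> \<omega> = 0"
  by (cases \<omega>) (auto simp: shadow_weight_def qbits_def)

lemma sum_outcomes_shadow_weight:
  assumes "density_matrix N \<rho>" "length B = N"
  shows "(\<Sum>S\<in>qbits N. shadow_weight N \<rho> (B, S)) = (1 / 3) ^ N"
proof -
  have "(\<Sum>S\<in>qbits N. shadow_weight N \<rho> (B, S))
      = (1 / 3) ^ N * Re (\<Sum>S\<in>qbits N. op_trace N (op_mult N \<rho> (proj_prod N B S)))"
    by (simp add: shadow_weight_def qbits_def assms sum_distrib_left)
  then show ?thesis
    using assms by (simp add: sum_outcomes_trace_mult_proj_prod density_matrix_def)
qed

lemma sum_shadow_weight_fst: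
  assumes "density_matrix N \<rho>"
  shows "(\<Sum>\<omega>\<in>basis_choices N \<times> qbits N. shadow_weight N \<rho> \<omega> * F (fst \<omega>))
           = (1 / 3) ^ N * (\<Sum>B\<in>basis_choices N. F B)"
proof -
  have "(\<Sum>\<omega>\<in>basis_choices N \<times> qbits N. shadow_weight N \<rho> \<omega> * F (fst \<omega>))
      = (\<Sum>B\<in>basis_choices N. F B * (\<Sum>S\<in>qbits N. shadow_weight N \<rho> (B, S)))"
    by (simp add: sum.cartesian_product' sum_distrib_left mult.commute)
  then show ?thesis
    by (simp add: sum_outcomes_shadow_weight[OF assms] sum_distrib_left mult.commute)
qed

lemma sum_shadow_weight:
  assumes "density_matrix N \<rho>"
  shows "(\<Sum>\<omega>\<in>basis_choices N \<times> qbits N. shadow_weight N \<rho> \<omega>) = 1"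
proof -
  have "card (UNIV :: pauli set) = 3"
    by (simp add: UNIV_pauli)
  then have "card (basis_choices N) = 3 ^ N"
    using card_lists_length_eq[of "UNIV :: pauli set" N] by simp
  then show ?thesis
    using sum_shadow_weight_fst[OF assms, of "\<lambda>_. 1"] by (simp add: power_one_over)
qed

lemma pmf_shadow_pmf:
  assumes "density_matrix N \<rho>"
  shows "pmf (shadow_pmf N \<rho>) \<omega> = shadow_weight N \<rho> \<omega>"
  unfolding shadow_pmf_def
proof (rule pmf_embed_pmf)
  have "(\<integral>\<^sup>+\<omega>. ennreal (shadow_weight N \<rho> \<omega>) \<partial>count_space UNIV)
      = (\<Sum>\<omega>\<in>basis_choices N \<times> qbits N. ennreal (shadow_weight N \<rho> \<omega>))"
    by (rule nn_integral_count_space')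
       (auto simp: finite_lists_length_eq_UNIV finite_qbits shadow_weight_eq_0)
  also have "\<dots> = ennreal (\<Sum>\<omega>\<in>basis_choices N \<times> qbits N. shadow_weight N \<rho> \<omega>)"
    by (rule sum_ennreal) (rule shadow_weight_nonneg[OF assms])
  also have "\<dots> = 1"
    by (simp add: sum_shadow_weight[OF assms])
  finally show "(\<integral>\<^sup>+\<omega>. ennreal (shadow_weight N \<rho> \<omega>) \<partial>count_space UNIV) = 1" .
qed (rule shadow_weight_nonneg[OF assms])

lemma set_shadow_pmf_subset:
  assumes "density_matrix N \<rho>"
  shows "set_pmf (shadow_pmf N \<rho>) \<subseteq> basis_choices N \<times> qbits N"
  using shadow_weight_eq_0 by (fastforce simp: set_pmf_iff pmf_shadow_pmf[OF assms])

lemma expectation_pair_pmf_finite: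
  fixes f :: "'a \<times> 'b \<Rightarrow> real"
  assumes "finite A" "set_pmf p \<subseteq> A" "finite B" "set_pmf q \<subseteq> B"
  shows "measure_pmf.expectation (pair_pmf p q) f = (\<Sum>a\<in>A. \<Sum>b\<in>B. pmf p a * pmf q b * f (a, b))"
proof -
  have "measure_pmf.expectation (pair_pmf p q) f = (\<Sum>\<omega>\<in>A \<times> B. pmf (pair_pmf p q) \<omega> *\<^sub>R f \<omega>)"
    by (rule integral_measure_pmf) (use assms in auto)
  then show ?thesis
    by (simp add: sum.cartesian_product' pmf_pair)
qed

lemma expectation_shadow_overlap_sq_le:
  assumes "density_matrix N \<rho>"
  shows "measure_pmf.expectation (pair_pmf (shadow_pmf N \<rho>) (shadow_pmf N \<rho>))
           (\<lambda>\<omega>. (shadow_overlap N \<omega>)\<^sup>2) \<le> 8.5 ^ N"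
proof -
  define A where "A = basis_choices N \<times> qbits N"
  define w where "w = shadow_weight N \<rho>"
  define G where "G B B' = (\<Prod>i<N. qubit_overlap_sq_bound (B ! i) (B' ! i))" for B B'
  have w_nonneg: "0 \<le> w \<omega>" for \<omega>
    unfolding w_def using assms by (rule shadow_weight_nonneg)
  have overlap_sq_le: "(shadow_overlap N (\<omega>, \<omega>'))\<^sup>2 \<le> G (fst \<omega>) (fst \<omega>')" for \<omega> \<omega>'
    using shadow_overlap_sq_le[of N "fst \<omega>" "snd \<omega>" "fst \<omega>'" "snd \<omega>'"] by (simp add: G_def)
  have sum_w_fst: "(\<Sum>\<omega>\<in>A. w \<omega> * F (fst \<omega>)) = (1 / 3) ^ N * (\<Sum>B\<in>basis_choices N. F B)" for F
    unfolding A_def w_def using assms by (rule sum_shadow_weight_fst)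
  have "measure_pmf.expectation (pair_pmf (shadow_pmf N \<rho>) (shadow_pmf N \<rho>))
          (\<lambda>\<omega>. (shadow_overlap N \<omega>)\<^sup>2)
      = (\<Sum>\<omega>\<in>A. \<Sum>\<omega>'\<in>A. w \<omega> * w \<omega>' * (shadow_overlap N (\<omega>, \<omega>'))\<^sup>2)"
    unfolding A_def w_def pmf_shadow_pmf[OF assms, symmetric]
    by (rule expectation_pair_pmf_finite)
       (simp_all add: finite_lists_length_eq_UNIV finite_qbits set_shadow_pmf_subset assms)
  also have "\<dots> \<le> (\<Sum>\<omega>\<in>A. \<Sum>\<omega>'\<in>A. w \<omega> * w \<omega>' * G (fst \<omega>) (fst \<omega>'))"
    by (intro sum_mono mult_left_mono overlap_sq_le mult_nonneg_nonneg w_nonneg)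
  also have "\<dots> = (\<Sum>\<omega>\<in>A. w \<omega> * ((1 / 3) ^ N * (\<Sum>B'\<in>basis_choices N. G (fst \<omega>) B')))"
    by (simp add: mult.assoc sum_distrib_left[symmetric] sum_w_fst)
  also have "\<dots> = (1 / 3) ^ N * (\<Sum>B\<in>basis_choices N. (1 / 3) ^ N * (\<Sum>B'\<in>basis_choices N. G B B'))"
    by (rule sum_w_fst)
  also have "\<dots> = (\<Sum>B\<in>basis_choices N. \<Sum>B'\<in>basis_choices N.
                       \<Prod>i<N. qubit_overlap_sq_bound (B ! i) (B' ! i) / 9)"
    by (simp add: G_def sum_distrib_left prod_dividef power_one_over flip: power_mult_distrib)
  also have "\<dots> = 8.5 ^ N"
    by (simp add: sum_qubit_overlap_sq_bound
          sum_lists_length_prod2[where f = "\<lambda>_ b b'. qubit_overlap_sq_bound b b' / 9"])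
  finally show ?thesis .
qed

theorem lemma3:
  fixes N :: nat and \<rho> :: op
  assumes "density_matrix N \<rho>"
  shows "measure_pmf.variance (pair_pmf (shadow_pmf N \<rho>) (shadow_pmf N \<rho>)) (shadow_overlap N)
           \<le> measure_pmf.expectation (pair_pmf (shadow_pmf N \<rho>) (shadow_pmf N \<rho>))
               (\<lambda>\<omega>. (shadow_overlap N \<omega>)\<^sup>2)
         \<and> measure_pmf.expectation (pair_pmf (shadow_pmf N \<rho>) (shadow_pmf N \<rho>))
               (\<lambda>\<omega>. (shadow_overlap N \<omega>)\<^sup>2) \<le> 8.5 ^ N"
proof
  have "finite (set_pmf (shadow_pmf N \<rho>))"
    by (rule finite_subset[OF set_shadow_pmf_subset[OF assms]])
       (simp add: finite_lists_length_eq_UNIV finite_qbits)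
  then have "integrable (pair_pmf (shadow_pmf N \<rho>) (shadow_pmf N \<rho>)) f" for f :: "_ \<Rightarrow> real"
    by (simp add: integrable_measure_pmf_finite)
  then show "measure_pmf.variance (pair_pmf (shadow_pmf N \<rho>) (shadow_pmf N \<rho>)) (shadow_overlap N)
      \<le> measure_pmf.expectation (pair_pmf (shadow_pmf N \<rho>) (shadow_pmf N \<rho>))
            (\<lambda>\<omega>. (shadow_overlap N \<omega>)\<^sup>2)"
    by (simp add: measure_pmf.variance_eq)
  show "measure_pmf.expectation (pair_pmf (shadow_pmf N \<rho>) (shadow_pmf N \<rho>))
      (\<lambda>\<omega>. (shadow_overlap N \<omega>)\<^sup>2) \<le> 8.5 ^ N"
    using assms by (rule expectation_shadow_overlap_sq_le)
qed

end
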